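(* Suppose $p=1$, or $p>1$ and $d_{\mathcal Y}(y_1,y_2)\le\max\{d_{\mathcal Y}(y_1,y_0),d_{\mathcal Y}(y_0,y_2)\}$ for all $y_1,y_2\in\mathcal Y$. Let $0\le m\le n\le l$ with $n\ge1$ and let $([m],v,e),([n],w,f)$ be graphs with attributes in $\mathcal X,\mathcal Y$. Extend $([m],v,e)$ to $([l],v,e)$ by $v_i=x_*$ for $m+1\le i\le l$ and $e_{ii'}=y_0$ whenever $\max\{i,i'\}\ge m+1$, and extend $([n],w,f)$ to $([l],w,f)$ by $w_i=x'_*$ for $n+1\le i\le l$ and $f_{ii'}=y_0$ whenever $\max\{i,i'\}\ge n+1$. Then $$d_{\mathbb G,R_2}(([m],v,e),([n],w,f))\le\Big(D_l\big(([l],v,e),([l],w,f)\big)^p+C_{\mathcal Y}^p\frac{n-m}{n}\Big)^{1/p}.$$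
   Context: $(\mathcal X,d_{\mathcal X})$, $(\mathcal Y,d_{\mathcal Y})$ are pseudometric spaces with $\mathrm{diam}(\mathcal X)\le C_{\mathcal X}$, $\mathrm{diam}(\mathcal Y)\le C_{\mathcal Y}$, $y_0\in\mathcal Y$ a distinguished "no edge" element, $p\ge1$, $C_2^p\ge C_{\mathcal X}^p+C_{\mathcal Y}^p$. Two new points $x_*,x'_*$ are adjoined to $\mathcal X$ with $d_{\mathcal X}(x_*,x)^p=d_{\mathcal X}(x,x_* )^p=C_2^p-C_{\mathcal Y}^p$ and $d_{\mathcal X}(x'_*,x)=d_{\mathcal X}(x,x'_* )=d_{\mathcal X}(x_*,x'_* )=d_{\mathcal X}(x'_*,x_* )=C_2$ for all $x\in\mathcal X$ (zero self-distances). A graph $([n],v,e)$ has vertex map into $\mathcal X\cup\{x_*,x'_*\}$ and symmetric $e:[n]^2\to\mathcal Y$ with $e_{ii}=y_0$; $S_n$ is the set of permutations of $[n]=\{1,\dots,n\}$. GOSPA2 distance (order $p$, penalty $C_2$; graphs with attributes in $\mathcal X$): for $n\ge\max\{m,1\}$, with $0/0:=0$, $$d_{\mathbb G,R_2}(([m],v,e),([n],w,f))=n^{-1/p}\min_{\pi\in S_n}\Big[(n-m)C_2^p+\sum_{i\in[m]}d_{\mathcal X}(v_i,w_{\pi(i)})^p+\frac{1}{2(n-1)}\Big(\sum_{(i,i')\in[m]^2}d_{\mathcal Y}(e_{ii'},f_{\pi(i)\pi(i')})^p+\sum_{(i,i')\in[n]^2\setminus[m]^2}d_{\mathcal Y}(y_0,f_{\pi(i)\pi(i')})^p\Big)\Big]^{1/p}.$$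 For two graphs of equal size $N\ge1$ (attributes in the extended spaces), $$D_N\big(([N],a,g),([N],b,h)\big)=N^{-1/p}\min_{\pi\in S_N}\Big[\sum_{i\in[N]}d_{\mathcal X}(a_i,b_{\pi(i)})^p+\frac{1}{2(N-1)}\sum_{(i,i')\in[N]^2}d_{\mathcal Y}(g_{ii'},h_{\pi(i)\pi(i')})^p\Big]^{1/p}.$$ *)

theory Defs
  imports "HOL-Analysis.Analysis" "HOL-Combinatorics.Permutations"
begin

definition pseudometric :: "('a \<Rightarrow> 'a \<Rightarrow> real) \<Rightarrow> bool" where
  "pseudometric d \<longleftrightarrow> (\<forall>x. d x x = 0) \<and> (\<forall>x y. d x y = d y x)
     \<and> (\<forall>x y z. d x z \<le> d x y + d y z)"

text \<open>The space X with the two adjoined points x_* (Star) and x'_* (Star').\<close>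
datatype 'x ext = Orig 'x | Star | Star'

fun dXext :: "real \<Rightarrow> real \<Rightarrow> real \<Rightarrow> ('x \<Rightarrow> 'x \<Rightarrow> real) \<Rightarrow> 'x ext \<Rightarrow> 'x ext \<Rightarrow> real" where
  "dXext p C2 CY dX (Orig x) (Orig y) = dX x y"
| "dXext p C2 CY dX Star Star = 0"
| "dXext p C2 CY dX Star' Star' = 0"
| "dXext p C2 CY dX Star (Orig x) = (C2 powr p - CY powr p) powr (1/p)"
| "dXext p C2 CY dX (Orig x) Star = (C2 powr p - CY powr p) powr (1/p)"
| "dXext p C2 CY dX Star' (Orig x) = C2"
| "dXext p C2 CY dX (Orig x) Star' = C2"
| "dXext p C2 CY dX Star Star' = C2"
| "dXext p C2 CY dX Star' Star = C2"

definition is_graph :: "'y \<Rightarrow> nat \<Rightarrow> (nat \<Rightarrow> nat \<Rightarrow> 'y) \<Rightarrow> bool" where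
  "is_graph y0 m e \<longleftrightarrow> (\<forall>i\<in>{1..m}. \<forall>i'\<in>{1..m}. e i i' = e i' i) \<and> (\<forall>i\<in>{1..m}. e i i = y0)"

text \<open>GOSPA2 distance (requires n \<ge> max m 1). Division by zero gives 0 in HOL (0/0 := 0).\<close>
definition gospa2_cost ::
  "real \<Rightarrow> real \<Rightarrow> ('x \<Rightarrow> 'x \<Rightarrow> real) \<Rightarrow> ('y \<Rightarrow> 'y \<Rightarrow> real) \<Rightarrow> 'y \<Rightarrow>
   nat \<Rightarrow> (nat \<Rightarrow> 'x) \<Rightarrow> (nat \<Rightarrow> nat \<Rightarrow> 'y) \<Rightarrow>
   nat \<Rightarrow> (nat \<Rightarrow> 'x) \<Rightarrow> (nat \<Rightarrow> nat \<Rightarrow> 'y) \<Rightarrow> (nat \<Rightarrow> nat) \<Rightarrow> real" where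
  "gospa2_cost p C2 dX dY y0 m v e n w f \<pi> =
     real (n - m) * C2 powr p + (\<Sum>i\<in>{1..m}. dX (v i) (w (\<pi> i)) powr p)
     + 1 / (2 * (real n - 1)) *
       ((\<Sum>(i,i')\<in>{1..m}\<times>{1..m}. dY (e i i') (f (\<pi> i) (\<pi> i')) powr p)
        + (\<Sum>(i,i')\<in>({1..n}\<times>{1..n}) - ({1..m}\<times>{1..m}). dY y0 (f (\<pi> i) (\<pi> i')) powr p))"

definition dGR2 ::
  "real \<Rightarrow> real \<Rightarrow> ('x \<Rightarrow> 'x \<Rightarrow> real) \<Rightarrow> ('y \<Rightarrow> 'y \<Rightarrow> real) \<Rightarrow> 'y \<Rightarrow>
   nat \<Rightarrow> (nat \<Rightarrow> 'x) \<Rightarrow> (nat \<Rightarrow> nat \<Rightarrow> 'y) \<Rightarrow>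
   nat \<Rightarrow> (nat \<Rightarrow> 'x) \<Rightarrow> (nat \<Rightarrow> nat \<Rightarrow> 'y) \<Rightarrow> real" where
  "dGR2 p C2 dX dY y0 m v e n w f =
     real n powr (- 1 / p) *
     (Min ((\<lambda>\<pi>. gospa2_cost p C2 dX dY y0 m v e n w f \<pi>) ` {\<pi>. \<pi> permutes {1..n}})) powr (1 / p)"

definition D_cost ::
  "real \<Rightarrow> ('a \<Rightarrow> 'a \<Rightarrow> real) \<Rightarrow> ('y \<Rightarrow> 'y \<Rightarrow> real) \<Rightarrow> nat \<Rightarrow>
   (nat \<Rightarrow> 'a) \<Rightarrow> (nat \<Rightarrow> nat \<Rightarrow> 'y) \<Rightarrow> (nat \<Rightarrow> 'a) \<Rightarrow> (nat \<Rightarrow> nat \<Rightarrow> 'y) \<Rightarrow> (nat \<Rightarrow> nat) \<Rightarrow> real" where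
  "D_cost p dA dY N a g b h \<pi> =
     (\<Sum>i\<in>{1..N}. dA (a i) (b (\<pi> i)) powr p)
     + 1 / (2 * (real N - 1)) * (\<Sum>(i,i')\<in>{1..N}\<times>{1..N}. dY (g i i') (h (\<pi> i) (\<pi> i')) powr p)"

definition D_dist ::
  "real \<Rightarrow> ('a \<Rightarrow> 'a \<Rightarrow> real) \<Rightarrow> ('y \<Rightarrow> 'y \<Rightarrow> real) \<Rightarrow> nat \<Rightarrow>
   (nat \<Rightarrow> 'a) \<Rightarrow> (nat \<Rightarrow> nat \<Rightarrow> 'y) \<Rightarrow> (nat \<Rightarrow> 'a) \<Rightarrow> (nat \<Rightarrow> nat \<Rightarrow> 'y) \<Rightarrow> real" where
  "D_dist p dA dY N a g b h =
     real N powr (- 1 / p) *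
     (Min ((\<lambda>\<pi>. D_cost p dA dY N a g b h \<pi>) ` {\<pi>. \<pi> permutes {1..N}})) powr (1 / p)"

definition ext_vert :: "nat \<Rightarrow> (nat \<Rightarrow> 'x) \<Rightarrow> 'x ext \<Rightarrow> nat \<Rightarrow> 'x ext" where
  "ext_vert m v pad = (\<lambda>i. if i \<le> m then Orig (v i) else pad)"

definition ext_edge :: "'y \<Rightarrow> nat \<Rightarrow> (nat \<Rightarrow> nat \<Rightarrow> 'y) \<Rightarrow> nat \<Rightarrow> nat \<Rightarrow> 'y" where
  "ext_edge y0 m e = (\<lambda>i i'. if max i i' \<ge> m + 1 then y0 else e i i')"

end

theory Submission
  imports Defs
begin

text \<open>
  Let \<open>\<pi>\<close> be an optimal matching for \<open>D\<^sub>l\<close> of the padded graphs, \<open>W\<close> the positions it sends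
  to genuine vertices of the second graph and \<open>F \<subseteq> W\<close> those that are genuine in the first
  graph too. Relabelling \<open>[n]\<close> onto \<open>W\<close> while fixing \<open>F\<close> turns \<open>\<pi>\<close> into a permutation \<open>\<sigma>\<close>
  of \<open>[n]\<close>, a competitor in the GOSPA2 minimum. On \<open>F\<close> both vertex costs agree; each other
  genuine vertex costs at most \<open>C\<^sub>X\<^sup>p\<close> in GOSPA2, while \<open>D\<^sub>l\<close> pays \<open>C\<^sub>2\<^sup>p\<close> or \<open>C\<^sub>2\<^sup>p - C\<^sub>Y\<^sup>p\<close>
  for every position outside \<open>F\<close>. An edge term of \<open>\<sigma>\<close> off \<open>F \<times> F\<close> is split at \<open>y\<^sub>0\<close> into
  two edge terms of \<open>\<pi>\<close> at disjoint index pairs; this is where \<open>p = 1\<close> or the ultrametric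
  condition is needed. Comparing the normalisations \<open>1/n\<close> and \<open>1/l\<close> leaves the excess
  \<open>C\<^sub>Y\<^sup>p (n - m)/n\<close>.
\<close>

lemma pseudometric_nonneg:
  assumes "pseudometric d"
  shows "0 \<le> d x y"
proof -
  have "d x x \<le> d x y + d y x" "d x x = 0" "d y x = d x y"
    using assms unfolding pseudometric_def by blast+
  then show ?thesis by linarith
qed

lemma pseudometric_powr_le_via:
  assumes "pseudometric d"
    and "p = 1 \<or> (p > 1 \<and> (\<forall>y1 y2. d y1 y2 \<le> max (d y1 y0) (d y0 y2)))"
  shows "d y1 y2 powr p \<le> d y1 y0 powr p + d y0 y2 powr p"
  using assms(2)
proof
  assume "p = 1"
  moreover have "d y1 y2 \<le> d y1 y0 + d y0 y2"
    using assms(1) unfolding pseudometric_def by blast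
  ultimately show ?thesis
    using pseudometric_nonneg[OF assms(1)] by simp
next
  assume "p > 1 \<and> (\<forall>y1 y2. d y1 y2 \<le> max (d y1 y0) (d y0 y2))"
  then have "d y1 y2 powr p \<le> max (d y1 y0) (d y0 y2) powr p"
    using pseudometric_nonneg[OF assms(1)] by (intro powr_mono2) auto
  also have "\<dots> \<le> d y1 y0 powr p + d y0 y2 powr p"
    by (simp add: max_def)
  finally show ?thesis .
qed

lemma bij_betw_fixing_common_part:
  assumes "finite A" "finite B" "card A = card B" "C \<subseteq> A" "C \<subseteq> B"
  obtains \<tau> where "bij_betw \<tau> A B" "\<And>i. i \<in> C \<Longrightarrow> \<tau> i = i"
    "\<And>i. i \<in> A - C \<Longrightarrow> \<tau> i \<in> B - C"
proof -
  have "card (A - C) = card (B - C)"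
    using assms by (simp add: card_Diff_subset finite_subset)
  then obtain \<tau>0 where \<tau>0: "bij_betw \<tau>0 (A - C) (B - C)"
    using finite_same_card_bij assms by blast
  define \<tau> where "\<tau> i = (if i \<in> C then i else \<tau>0 i)" for i
  have "bij_betw \<tau> (C \<union> (A - C)) (C \<union> (B - C))"
  proof (rule bij_betw_combine)
    show "bij_betw \<tau> C C" by (simp add: \<tau>_def bij_betw_def inj_on_def)
    show "bij_betw \<tau> (A - C) (B - C)"
      using \<tau>0 by (rule bij_betw_cong[THEN iffD1, rotated]) (simp add: \<tau>_def)
  qed auto
  moreover have "C \<union> (A - C) = A" "C \<union> (B - C) = B" using assms by auto
  moreover have "\<tau> i \<in> B - C" if "i \<in> A - C" for i
    using \<tau>0 that by (auto simp: \<tau>_def bij_betw_def)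
  ultimately show ?thesis using that by (simp add: \<tau>_def)
qed

lemma sum_add_sum_reindex_le:
  fixes T :: "'a \<Rightarrow> 'b::ordered_comm_monoid_add"
  assumes "finite U" "\<And>x. x \<in> U \<Longrightarrow> 0 \<le> T x" "A \<subseteq> U"
    and "inj_on \<phi> B" "\<phi> ` B \<subseteq> U" "A \<inter> \<phi> ` B = {}"
  shows "sum T A + sum (T \<circ> \<phi>) B \<le> sum T U"
proof -
  have "sum (T \<circ> \<phi>) B = sum T (\<phi> ` B)"
    using assms(4) by (rule sum.reindex[symmetric])
  then have "sum T A + sum (T \<circ> \<phi>) B = sum T (A \<union> \<phi> ` B)"
    using assms by (simp add: sum.union_disjoint finite_subset)
  also have "\<dots> \<le> sum T U"
    using assms by (intro sum_mono2) auto
  finally show ?thesis .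
qed

lemma sum_square_le_off_diagonal:
  fixes F :: "'a \<Rightarrow> 'a \<Rightarrow> real"
  assumes "finite I" "\<And>i. i \<in> I \<Longrightarrow> F i i = 0"
    and "\<And>i j. i \<in> I \<Longrightarrow> j \<in> I \<Longrightarrow> i \<noteq> j \<Longrightarrow> F i j \<le> c"
  shows "(\<Sum>(i,j)\<in>I \<times> I. F i j) \<le> real (card I) * (real (card I) - 1) * c"
proof -
  have row: "(\<Sum>j\<in>I. F i j) \<le> (real (card I) - 1) * c" if i: "i \<in> I" for i
  proof -
    have "(\<Sum>j\<in>I. F i j) = (\<Sum>j\<in>I - {i}. F i j)"
      using assms i by (simp add: sum.remove)
    also have "\<dots> \<le> (\<Sum>j\<in>I - {i}. c)"
      using assms i by (intro sum_mono) auto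
    moreover have "card I > 0" using assms(1) i card_gt_0_iff by blast
    ultimately show ?thesis using assms i by (simp add: of_nat_diff)
  qed
  have "(\<Sum>(i,j)\<in>I \<times> I. F i j) = (\<Sum>i\<in>I. \<Sum>j\<in>I. F i j)"
    by (rule sum.cartesian_product[symmetric])
  also have "\<dots> \<le> (\<Sum>i\<in>I. (real (card I) - 1) * c)"
    using row by (rule sum_mono)
  finally show ?thesis by simp
qed

text \<open>\<open>Fr = |F|\<close>, \<open>s\<close> is the vertex cost on \<open>F\<close>, \<open>Gv\<close> and \<open>Vd\<close> are the vertex sums of the
  GOSPA2 and \<open>D\<^sub>l\<close> costs.\<close>

lemma vertex_cost_scaling_le:
  fixes L N M Fr s cx cy c2 Gv Vd :: real
  assumes "0 \<le> Fr" "Fr \<le> M" "M \<le> N" "N \<le> L" "0 \<le> s" "s \<le> Fr * cx" "0 \<le> cx" "0 \<le> cy"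
    and "cx + cy \<le> c2" "Gv \<le> s + (M - Fr) * cx" "s + (L - Fr) * c2 - (N - Fr) * cy \<le> Vd"
  shows "L * ((N - M) * c2 + Gv) \<le> N * Vd + L * (N - M) * cy - N * (L - N) * cy"
proof -
  have "L * Gv \<le> L * (s + (M - Fr) * cx)"
    using assms by (intro mult_left_mono) auto
  moreover have "N * (s + (L - Fr) * c2 - (N - Fr) * cy) \<le> N * Vd"
    using assms by (intro mult_left_mono) auto
  moreover have "0 \<le> (L - N) * (Fr * cx - s)"
    using assms by auto
  moreover have "N * Fr \<le> L * M"
    using assms by (intro mult_mono) auto
  then have "0 \<le> (L * M - N * Fr) * (c2 - cx - cy)"
    using assms by auto
  ultimately show ?thesis by (simp add: algebra_simps)
qed

lemma edge_cost_scaling_le: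
  fixes L N :: nat and a b cy :: real
  assumes "1 \<le> N" "N \<le> L" "0 \<le> a" "a \<le> b" "a \<le> N * (real N - 1) * cy" "0 \<le> cy"
  shows "L * (1 / (2 * (real N - 1)) * a)
    \<le> N * (1 / (2 * (real L - 1)) * b) + N * (real L - real N) * cy"
proof (cases "N = 1")
  case True
  then show ?thesis using assms by simp
next
  case False
  then have N1: "real N > 1" and L1: "real L > 1" using assms by auto
  have factor: "(real L - N) * (real L + N - 1) \<le> (real L - N) * (2 * (real L - 1))"
    using assms by (cases "N = L") auto
  have "(real L - N) * (real L + N - 1) * a
      \<le> (real L - N) * (2 * (real L - 1)) * (N * (real N - 1) * cy)"
    by (rule mult_mono[OF factor]) (use assms N1 in auto)
  moreover have "N * (real N - 1) * a \<le> N * (real N - 1) * b"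
    using assms N1 by (intro mult_left_mono) auto
  ultimately have "L * (real L - 1) * a
      \<le> N * (real N - 1) * b + 2 * (real L - N) * N * (real N - 1) * (real L - 1) * cy"
    by (simp add: algebra_simps)
  then show ?thesis using N1 L1 by (simp add: field_simps)
qed

lemma gospa2_cost_nonneg:
  assumes "1 \<le> n"
  shows "0 \<le> gospa2_cost p C2 dX dY y0 m v e n w f \<pi>"
  using assms unfolding gospa2_cost_def
  by (intro add_nonneg_nonneg mult_nonneg_nonneg sum_nonneg) (auto split: prod.splits)

lemma D_cost_nonneg:
  assumes "1 \<le> N"
  shows "0 \<le> D_cost p dA dY N a g b h \<pi>"
  using assms unfolding D_cost_def
  by (intro add_nonneg_nonneg mult_nonneg_nonneg sum_nonneg) (auto split: prod.splits)

lemma dGR2_le_cost: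
  assumes "0 < p" "1 \<le> n" "\<sigma> permutes {1..n}"
  shows "dGR2 p C2 dX dY y0 m v e n w f
    \<le> (gospa2_cost p C2 dX dY y0 m v e n w f \<sigma> / n) powr (1 / p)"
proof -
  let ?c = "gospa2_cost p C2 dX dY y0 m v e n w f"
  let ?costs = "?c ` {\<pi>. \<pi> permutes {1..n}}"
  have fin: "finite ?costs" by (simp add: finite_permutations)
  have \<sigma>: "?c \<sigma> \<in> ?costs" using assms(3) by blast
  have "Min ?costs \<le> ?c \<sigma>" using Min_le[OF fin \<sigma>] .
  moreover have "0 \<le> Min ?costs"
    using Min_in[OF fin] \<sigma> gospa2_cost_nonneg[OF assms(2)] by fastforce
  ultimately have "dGR2 p C2 dX dY y0 m v e n w f \<le> real n powr (- 1 / p) * ?c \<sigma> powr (1 / p)"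
    unfolding dGR2_def using assms by (intro mult_left_mono powr_mono2) auto
  also have "\<dots> = (?c \<sigma> / n) powr (1 / p)"
    using gospa2_cost_nonneg[OF assms(2), of p C2 dX dY y0 m v e w f \<sigma>] assms(2)
    by (simp add: powr_divide powr_minus_divide)
  finally show ?thesis .
qed

lemma D_dist_powr_attained:
  assumes "0 < p" "1 \<le> N"
  obtains \<pi> where "\<pi> permutes {1..N}"
    "D_dist p dA dY N a g b h powr p = D_cost p dA dY N a g b h \<pi> / N"
proof -
  let ?c = "D_cost p dA dY N a g b h"
  let ?costs = "?c ` {\<pi>. \<pi> permutes {1..N}}"
  have fin: "finite ?costs" by (simp add: finite_permutations)
  have "?c id \<in> ?costs" using permutes_id by blast
  then obtain \<pi> where \<pi>: "\<pi> permutes {1..N}" "Min ?costs = ?c \<pi>"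
    using Min_in[OF fin] by fastforce
  have "D_dist p dA dY N a g b h powr p = real N powr (- 1 / p * p) * ?c \<pi> powr (1 / p * p)"
    unfolding D_dist_def \<pi>(2) by (simp add: powr_mult powr_powr)
  also have "\<dots> = ?c \<pi> / N"
    using assms D_cost_nonneg[OF assms(2), of p dA dY a g b h \<pi>] by (simp add: powr_neg_one)
  finally show ?thesis using \<pi>(1) that by blast
qed

lemma gospa2_cost_as_padded:
  assumes "m \<le> n" "\<sigma> permutes {1..n}"
  shows "gospa2_cost p C2 dX dY y0 m v e n w f \<sigma>
    = (real n - real m) * C2 powr p + (\<Sum>i\<in>{1..m}. dX (v i) (w (\<sigma> i)) powr p)
      + 1 / (2 * (real n - 1)) * (\<Sum>(i,i')\<in>{1..n}\<times>{1..n}.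
          dY (ext_edge y0 m e i i') (ext_edge y0 n f (\<sigma> i) (\<sigma> i')) powr p)"
proof -
  let ?G = "\<lambda>(i,i'). dY (ext_edge y0 m e i i') (ext_edge y0 n f (\<sigma> i) (\<sigma> i')) powr p"
  let ?inner = "{1..m}\<times>{1..m}" and ?outer = "{1..n}\<times>{1..n} - {1..m}\<times>{1..m}"
  have \<sigma>_in: "\<sigma> i \<in> {1..n}" if "i \<in> {1..n}" for i
    using permutes_in_image[OF assms(2)] that by blast
  have "(\<lambda>(i,i'). dY (e i i') (f (\<sigma> i) (\<sigma> i')) powr p) q = ?G q" if "q \<in> ?inner" for q
    using that \<sigma>_in[of "fst q"] \<sigma>_in[of "snd q"] assms(1)
    by (auto simp: ext_edge_def max_def split: prod.splits)
  then have "(\<Sum>(i,i')\<in>?inner. dY (e i i') (f (\<sigma> i) (\<sigma> i')) powr p) = sum ?G ?inner"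
    by (rule sum.cong[OF refl])
  moreover have "(\<lambda>(i,i'). dY y0 (f (\<sigma> i) (\<sigma> i')) powr p) q = ?G q" if "q \<in> ?outer" for q
    using that \<sigma>_in[of "fst q"] \<sigma>_in[of "snd q"]
    by (auto simp: ext_edge_def split: prod.splits)
  then have "(\<Sum>(i,i')\<in>?outer. dY y0 (f (\<sigma> i) (\<sigma> i')) powr p) = sum ?G ?outer"
    by (rule sum.cong[OF refl])
  moreover have "sum ?G ({1..n}\<times>{1..n}) = sum ?G ?outer + sum ?G ?inner"
    using assms(1) by (intro sum.subset_diff) auto
  ultimately show ?thesis
    using assms(1) by (simp add: gospa2_cost_def of_nat_diff)
qed

lemma permutes_bij_betw_preimage:
  assumes "\<pi> permutes A" "B \<subseteq> A"
  shows "bij_betw \<pi> {i \<in> A. \<pi> i \<in> B} B"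
proof -
  have "inj_on \<pi> {i \<in> A. \<pi> i \<in> B}"
    using permutes_inj[OF assms(1)] by (auto intro: inj_on_subset)
  moreover have "\<pi> ` {i \<in> A. \<pi> i \<in> B} = B"
    using permutes_image[OF assms(1)] assms(2) by force
  ultimately show ?thesis by (simp add: bij_betw_def)
qed

locale padded_matching =
  fixes m n l :: nat and \<pi> \<tau> :: "nat \<Rightarrow> nat" and W F :: "nat set"
  assumes m_le_n: "m \<le> n" and n_le_l: "n \<le> l"
    and \<pi>_permutes: "\<pi> permutes {1..l}"
    and W_def: "W = {i \<in> {1..l}. \<pi> i \<in> {1..n}}"
    and F_def: "F = {1..m} \<inter> W"
    and \<tau>_bij: "bij_betw \<tau> {1..n} W"
    and \<tau>_fixes_F: "\<And>i. i \<in> F \<Longrightarrow> \<tau> i = i"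
    and \<tau>_avoids_F: "\<And>i. i \<in> {1..n} - F \<Longrightarrow> \<tau> i \<in> W - F"

lemma padded_matching_exists:
  assumes "m \<le> n" "n \<le> l" "\<pi> permutes {1..l}"
  obtains \<tau> W F where "padded_matching m n l \<pi> \<tau> W F"
proof -
  define W where "W = {i \<in> {1..l}. \<pi> i \<in> {1..n}}"
  define F where "F = {1..m} \<inter> W"
  have "card W = n"
    using bij_betw_same_card[OF permutes_bij_betw_preimage[OF assms(3), of "{1..n}"]] assms(2)
    by (simp add: W_def)
  moreover have "finite W" "F \<subseteq> {1..n}" "F \<subseteq> W"
    using assms(1) by (auto simp: W_def F_def)
  ultimately obtain \<tau> where "bij_betw \<tau> {1..n} W" "\<And>i. i \<in> F \<Longrightarrow> \<tau> i = i"
      "\<And>i. i \<in> {1..n} - F \<Longrightarrow> \<tau> i \<in> W - F"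
    using bij_betw_fixing_common_part[of "{1..n}" W F] by auto
  then show ?thesis
    using that assms unfolding padded_matching_def W_def F_def by blast
qed

context padded_matching
begin

definition \<sigma> :: "nat \<Rightarrow> nat" where
  "\<sigma> i = (if i \<in> {1..n} then \<pi> (\<tau> i) else i)"

lemma F_W_subset: "F \<subseteq> {1..m}" "F \<subseteq> W" "W \<subseteq> {1..l}"
  unfolding F_def W_def by auto

lemma card_W: "card W = n"
  using bij_betw_same_card[OF \<tau>_bij] by simp

lemma \<tau>_gt_m: "i \<in> {1..n} - F \<Longrightarrow> m < \<tau> i"
  using \<tau>_avoids_F unfolding F_def W_def by force

lemma \<pi>_in: "i \<in> {1..l} \<Longrightarrow> \<pi> i \<in> {1..l}"
  using permutes_in_image[OF \<pi>_permutes] by blast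

lemma \<sigma>_permutes: "\<sigma> permutes {1..n}"
proof (rule bij_imp_permutes)
  have "bij_betw \<pi> W {1..n}"
    unfolding W_def using permutes_bij_betw_preimage[OF \<pi>_permutes, of "{1..n}"] n_le_l by simp
  then have "bij_betw (\<pi> \<circ> \<tau>) {1..n} {1..n}"
    using \<tau>_bij by (rule bij_betw_trans[rotated])
  then show "bij_betw \<sigma> {1..n} {1..n}"
    by (rule bij_betw_cong[THEN iffD1, rotated]) (simp add: \<sigma>_def)
qed (auto simp: \<sigma>_def)

lemma \<sigma>_eq_\<pi>_on_F: "i \<in> F \<Longrightarrow> \<sigma> i = \<pi> i"
  using F_W_subset m_le_n \<tau>_fixes_F by (auto simp: \<sigma>_def)

text \<open>Off \<open>F \<times> F\<close> the term is split at \<open>y\<^sub>0\<close>: one summand is charged to \<open>(i, i')\<close>, the other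
  to \<open>(\<tau> i, \<tau> i')\<close>, which lies outside \<open>[m]\<^sup>2\<close>, where the first padded graph only has \<open>y\<^sub>0\<close>.\<close>

lemma edge_term_le:
  fixes dY :: "'y \<Rightarrow> 'y \<Rightarrow> real" and e f :: "nat \<Rightarrow> nat \<Rightarrow> 'y"
  assumes dY_refl: "\<And>y. dY y y = 0"
    and dY_via_y0: "\<And>y1 y2. dY y1 y2 powr p \<le> dY y1 y0 powr p + dY y0 y2 powr p"
    and i: "i \<in> {1..n}" "i' \<in> {1..n}"
  defines "T \<equiv> \<lambda>(j, j'). dY (ext_edge y0 m e j j') (ext_edge y0 n f (\<pi> j) (\<pi> j')) powr p"
  shows "dY (ext_edge y0 m e i i') (ext_edge y0 n f (\<sigma> i) (\<sigma> i')) powr p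
    \<le> (if (i, i') \<in> {1..m} \<times> {1..m} then T (i, i') else 0)
      + (if (i, i') \<in> F \<times> F then 0 else T (\<tau> i, \<tau> i'))"
proof (cases "(i, i') \<in> F \<times> F")
  case True
  then show ?thesis using F_W_subset \<sigma>_eq_\<pi>_on_F by (auto simp: T_def)
next
  case not_FF: False
  let ?g = "ext_edge y0 m e" and ?h = "ext_edge y0 n f"
  have "m < \<tau> i \<or> m < \<tau> i'" using not_FF i \<tau>_gt_m by auto
  then have "dY y0 (?h (\<sigma> i) (\<sigma> i')) powr p = T (\<tau> i, \<tau> i')"
    using i by (auto simp: T_def \<sigma>_def ext_edge_def)
  moreover have "dY (?g i i') y0 powr p \<le> (if (i, i') \<in> {1..m} \<times> {1..m} then T (i, i') else 0)"
  proof (cases "(i, i') \<in> {1..m} \<times> {1..m}")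
    case True
    then have "\<pi> i \<notin> {1..n} \<or> \<pi> i' \<notin> {1..n}"
      using not_FF m_le_n n_le_l by (auto simp: F_def W_def)
    moreover have "\<pi> i \<in> {1..l}" "\<pi> i' \<in> {1..l}" using i \<pi>_in n_le_l by auto
    ultimately have "?h (\<pi> i) (\<pi> i') = y0" by (auto simp: ext_edge_def)
    then show ?thesis using True by (simp add: T_def)
  next
    case False
    then show ?thesis using i dY_refl by (auto simp: ext_edge_def)
  qed
  moreover have "(if (i, i') \<in> F \<times> F then 0 else T (\<tau> i, \<tau> i')) = T (\<tau> i, \<tau> i')"
    by (rule if_not_P[OF not_FF])
  ultimately show ?thesis using dY_via_y0[of "?g i i'" "?h (\<sigma> i) (\<sigma> i')"] by linarith
qed

lemma edge_sum_le:
  fixes dY :: "'y \<Rightarrow> 'y \<Rightarrow> real"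
  assumes "\<And>y. dY y y = 0"
    and "\<And>y1 y2. dY y1 y2 powr p \<le> dY y1 y0 powr p + dY y0 y2 powr p"
  shows "(\<Sum>(i,i')\<in>{1..n}\<times>{1..n}. dY (ext_edge y0 m e i i') (ext_edge y0 n f (\<sigma> i) (\<sigma> i')) powr p)
    \<le> (\<Sum>(i,i')\<in>{1..l}\<times>{1..l}. dY (ext_edge y0 m e i i') (ext_edge y0 n f (\<pi> i) (\<pi> i')) powr p)"
proof -
  define T where "T = (\<lambda>(j, j'). dY (ext_edge y0 m e j j') (ext_edge y0 n f (\<pi> j) (\<pi> j')) powr p)"
  let ?\<tau>\<tau> = "map_prod \<tau> \<tau>" and ?pairs = "{1..n} \<times> {1..n} - F \<times> F"
  have "(\<Sum>(i,i')\<in>{1..n}\<times>{1..n}. dY (ext_edge y0 m e i i') (ext_edge y0 n f (\<sigma> i) (\<sigma> i')) powr p)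
      \<le> (\<Sum>q\<in>{1..n}\<times>{1..n}. (if q \<in> {1..m}\<times>{1..m} then T q else 0) + (if q \<in> F \<times> F then 0 else T (?\<tau>\<tau> q)))"
  proof (rule sum_mono)
    fix q assume "q \<in> {1..n}\<times>{1..n}"
    then obtain i i' where q: "q = (i, i')" and i: "i \<in> {1..n}" "i' \<in> {1..n}" by auto
    show "(case q of (i,i') \<Rightarrow> dY (ext_edge y0 m e i i') (ext_edge y0 n f (\<sigma> i) (\<sigma> i')) powr p)
      \<le> (if q \<in> {1..m}\<times>{1..m} then T q else 0) + (if q \<in> F \<times> F then 0 else T (?\<tau>\<tau> q))"
      using edge_term_le[where dY = dY and e = e and f = f, OF assms i]
      unfolding q T_def by (simp only: map_prod_simp prod.case)
  qed
  also have "\<dots> = sum T ({1..m}\<times>{1..m}) + sum (T \<circ> ?\<tau>\<tau>) ?pairs"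
  proof -
    have "{1..m}\<times>{1..m} \<subseteq> {1..n}\<times>{1..n}" using m_le_n by auto
    then show ?thesis by (simp add: sum.distrib sum.If_cases Int_absorb1 Diff_eq)
  qed
  also have "\<dots> \<le> sum T ({1..l}\<times>{1..l})"
  proof (rule sum_add_sum_reindex_le)
    have "inj_on ?\<tau>\<tau> ({1..n}\<times>{1..n})"
      using \<tau>_bij by (intro map_prod_inj_on) (auto simp: bij_betw_def)
    then show "inj_on ?\<tau>\<tau> ?pairs" by (rule inj_on_subset) auto
    show "?\<tau>\<tau> ` ?pairs \<subseteq> {1..l}\<times>{1..l}"
      using \<tau>_bij F_W_subset by (auto simp: bij_betw_def)
    show "{1..m}\<times>{1..m} \<inter> ?\<tau>\<tau> ` ?pairs = {}"
      using \<tau>_gt_m by force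
  qed (use m_le_n n_le_l in \<open>auto simp: T_def\<close>)
  finally show ?thesis by (simp add: T_def)
qed

lemma edge_sum_le_diameter:
  fixes dY :: "'y \<Rightarrow> 'y \<Rightarrow> real"
  assumes "\<And>y. dY y y = 0" "\<And>y y'. dY y y' powr p \<le> c"
    and "is_graph y0 m e" "is_graph y0 n f"
  shows "(\<Sum>(i,i')\<in>{1..n}\<times>{1..n}. dY (ext_edge y0 m e i i') (ext_edge y0 n f (\<sigma> i) (\<sigma> i')) powr p)
    \<le> real n * (real n - 1) * c"
proof -
  have "ext_edge y0 m e i i = y0" "ext_edge y0 n f (\<sigma> i) (\<sigma> i) = y0" if "i \<in> {1..n}" for i
    using assms(3,4) that permutes_in_image[OF \<sigma>_permutes, of i]
    by (auto simp: is_graph_def ext_edge_def)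
  then show ?thesis
    using sum_square_le_off_diagonal[of "{1..n}"] assms(1,2) by simp
qed

lemma vertex_sum_le:
  fixes dX :: "'x \<Rightarrow> 'x \<Rightarrow> real"
  assumes "\<And>x x'. dX x x' powr p \<le> cx"
  shows "(\<Sum>i\<in>{1..m}. dX (v i) (w (\<sigma> i)) powr p)
    \<le> (\<Sum>i\<in>F. dX (v i) (w (\<pi> i)) powr p) + (real m - real (card F)) * cx"
proof -
  let ?d = "\<lambda>i. dX (v i) (w (\<sigma> i)) powr p"
  have fin: "finite F" using F_W_subset(1) finite_subset by blast
  have "sum ?d {1..m} = sum ?d ({1..m} - F) + sum ?d F"
    using F_W_subset(1) by (intro sum.subset_diff) auto
  also have "sum ?d F = (\<Sum>i\<in>F. dX (v i) (w (\<pi> i)) powr p)"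
    using \<sigma>_eq_\<pi>_on_F by simp
  also have "sum ?d ({1..m} - F) \<le> real (card ({1..m} - F)) * cx"
    using assms by (intro sum_bounded_above) auto
  also have "real (card ({1..m} - F)) = real m - real (card F)"
    using card_Diff_subset[OF fin F_W_subset(1)] card_mono[OF _ F_W_subset(1)] by (simp add: of_nat_diff)
  finally show ?thesis by simp
qed

lemma padded_vertex_sum_eq:
  fixes dX :: "'x \<Rightarrow> 'x \<Rightarrow> real" and v w :: "nat \<Rightarrow> 'x"
  assumes "0 < p" "CY powr p \<le> C2 powr p"
  shows "(\<Sum>i\<in>{1..l}. dXext p C2 CY dX (ext_vert m v Star i) (ext_vert n w Star' (\<pi> i)) powr p)
    = (\<Sum>i\<in>F. dX (v i) (w (\<pi> i)) powr p)
      + (real l - real (card F)) * C2 powr p - (real n - real (card F)) * CY powr p"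
proof -
  let ?d = "\<lambda>i. dXext p C2 CY dX (ext_vert m v Star i) (ext_vert n w Star' (\<pi> i)) powr p"
  have fin: "finite F" "finite W" using F_W_subset finite_subset by blast+
  have off_F: "?d i = C2 powr p - (if i \<in> W then CY powr p else 0)" if "i \<in> {1..l} - F" for i
  proof -
    have "\<pi> i \<in> {1..l}" using that \<pi>_in by auto
    then show ?thesis
      using that assms
      by (cases "i \<le> m"; cases "\<pi> i \<le> n") (auto simp: ext_vert_def F_def W_def powr_powr)
  qed
  have "sum ?d {1..l} = sum ?d ({1..l} - F) + sum ?d F"
    using F_W_subset by (intro sum.subset_diff) auto
  also have "sum ?d F = (\<Sum>i\<in>F. dX (v i) (w (\<pi> i)) powr p)"
    by (intro sum.cong) (auto simp: ext_vert_def F_def W_def)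
  also have "sum ?d ({1..l} - F) = real (card ({1..l} - F)) * C2 powr p - real (card (W - F)) * CY powr p"
  proof -
    have "({1..l} - F) \<inter> W = W - F" using F_W_subset by auto
    then show ?thesis
      using off_F by (simp add: sum_subtractf sum.If_cases)
  qed
  also have "real (card ({1..l} - F)) = real l - real (card F)"
    using card_Diff_subset[OF fin(1)] card_mono[of "{1..l}" F] F_W_subset by (simp add: of_nat_diff)
  also have "real (card (W - F)) = real n - real (card F)"
    using card_Diff_subset[OF fin(1)] card_mono[OF fin(2)] F_W_subset card_W by (simp add: of_nat_diff)
  finally show ?thesis by simp
qed

lemma gospa2_cost_le_D_cost:
  fixes dX :: "'x \<Rightarrow> 'x \<Rightarrow> real" and dY :: "'y \<Rightarrow> 'y \<Rightarrow> real"
  assumes p: "0 < p" and n: "1 \<le> n"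
    and pmX: "pseudometric dX" and pmY: "pseudometric dY"
    and diamX: "\<And>x x'. dX x x' \<le> CX" and diamY: "\<And>y y'. dY y y' \<le> CY"
    and C2: "CX powr p + CY powr p \<le> C2 powr p"
    and dY_via_y0: "\<And>y1 y2. dY y1 y2 powr p \<le> dY y1 y0 powr p + dY y0 y2 powr p"
    and ge: "is_graph y0 m e" and gf: "is_graph y0 n f"
  shows "real l * gospa2_cost p C2 dX dY y0 m v e n w f \<sigma>
    \<le> real n * D_cost p (dXext p C2 CY dX) dY l (ext_vert m v Star) (ext_edge y0 m e)
                 (ext_vert n w Star') (ext_edge y0 n f) \<pi>
      + real l * (real n - real m) * CY powr p"
proof -
  define SG where "SG = (\<Sum>(i,i')\<in>{1..n}\<times>{1..n}.
    dY (ext_edge y0 m e i i') (ext_edge y0 n f (\<sigma> i) (\<sigma> i')) powr p)"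
  define SD where "SD = (\<Sum>(i,i')\<in>{1..l}\<times>{1..l}.
    dY (ext_edge y0 m e i i') (ext_edge y0 n f (\<pi> i) (\<pi> i')) powr p)"
  define sF where "sF = (\<Sum>i\<in>F. dX (v i) (w (\<pi> i)) powr p)"
  have dY_refl: "\<And>y. dY y y = 0" using pmY by (simp add: pseudometric_def)
  have dX_bound: "\<And>x x'. dX x x' powr p \<le> CX powr p"
    using pseudometric_nonneg[OF pmX] diamX p by (intro powr_mono2) auto
  have dY_bound: "\<And>y y'. dY y y' powr p \<le> CY powr p"
    using pseudometric_nonneg[OF pmY] diamY p by (intro powr_mono2) auto
  have "SG \<le> SD" unfolding SG_def SD_def using edge_sum_le[where dY = dY, OF dY_refl dY_via_y0] .
  moreover have "SG \<le> real n * (real n - 1) * CY powr p"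
    unfolding SG_def using edge_sum_le_diameter[OF dY_refl dY_bound ge gf] .
  moreover have "0 \<le> SG" unfolding SG_def by (auto intro: sum_nonneg)
  moreover have "real l * ((real n - real m) * C2 powr p + (\<Sum>i\<in>{1..m}. dX (v i) (w (\<sigma> i)) powr p))
      \<le> real n * (\<Sum>i\<in>{1..l}. dXext p C2 CY dX (ext_vert m v Star i) (ext_vert n w Star' (\<pi> i)) powr p)
        + real l * (real n - real m) * CY powr p - real n * (real l - real n) * CY powr p"
  proof (rule vertex_cost_scaling_le)
    show "sF \<le> real (card F) * CX powr p"
      unfolding sF_def using dX_bound by (intro sum_bounded_above) auto
    show "real (card F) \<le> real m" using card_mono[OF _ F_W_subset(1)] by simp
    have "CY powr p \<le> C2 powr p" using C2 by (smt (verit) powr_ge_zero)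
    from padded_vertex_sum_eq[OF p this, of dX v w]
    show "sF + (real l - real (card F)) * C2 powr p - (real n - real (card F)) * CY powr p
      \<le> (\<Sum>i\<in>{1..l}. dXext p C2 CY dX (ext_vert m v Star i) (ext_vert n w Star' (\<pi> i)) powr p)"
      unfolding sF_def by simp
  qed (use vertex_sum_le[where dX = dX, OF dX_bound] C2 m_le_n n_le_l
         in \<open>auto simp: sF_def intro: sum_nonneg\<close>)
  ultimately show ?thesis
    using edge_cost_scaling_le[OF n n_le_l, of SG SD "CY powr p"]
    by (simp add: gospa2_cost_as_padded[OF m_le_n \<sigma>_permutes] D_cost_def SG_def SD_def algebra_simps)
qed

end

theorem lemmaD:
  fixes dX :: "'x \<Rightarrow> 'x \<Rightarrow> real" and dY :: "'y \<Rightarrow> 'y \<Rightarrow> real"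
    and y0 :: 'y and p CX CY C2 :: real and m n l :: nat
    and v w :: "nat \<Rightarrow> 'x" and e f :: "nat \<Rightarrow> nat \<Rightarrow> 'y"
  assumes pmX: "pseudometric dX" and pmY: "pseudometric dY"
    and diamX: "\<forall>x x'. dX x x' \<le> CX" and diamY: "\<forall>y y'. dY y y' \<le> CY"
    and p1: "p \<ge> 1"
    and C2nn: "C2 \<ge> 0"
    and C2: "C2 powr p \<ge> CX powr p + CY powr p"
    and ultra: "p = 1 \<or> (p > 1 \<and> (\<forall>y1 y2. dY y1 y2 \<le> max (dY y1 y0) (dY y0 y2)))"
    and mn: "m \<le> n" and nl: "n \<le> l" and n1: "n \<ge> 1"
    and ge: "is_graph y0 m e" and gf: "is_graph y0 n f"
  shows "dGR2 p C2 dX dY y0 m v e n w f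
         \<le> (D_dist p (dXext p C2 CY dX) dY l
               (ext_vert m v Star) (ext_edge y0 m e)
               (ext_vert n w Star') (ext_edge y0 n f) powr p
             + CY powr p * (real (n - m) / real n)) powr (1 / p)"
proof -
  let ?D = "D_cost p (dXext p C2 CY dX) dY l (ext_vert m v Star) (ext_edge y0 m e)
              (ext_vert n w Star') (ext_edge y0 n f)"
  have p: "0 < p" using p1 by simp
  obtain \<pi> where \<pi>: "\<pi> permutes {1..l}"
    and D_eq: "D_dist p (dXext p C2 CY dX) dY l (ext_vert m v Star) (ext_edge y0 m e)
                 (ext_vert n w Star') (ext_edge y0 n f) powr p = ?D \<pi> / l"
    using D_dist_powr_attained[OF p] n1 nl by (metis order_trans)
  obtain \<tau> W F where "padded_matching m n l \<pi> \<tau> W F"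
    using padded_matching_exists[OF mn nl \<pi>] .
  then interpret padded_matching m n l \<pi> \<tau> W F .
  let ?G = "gospa2_cost p C2 dX dY y0 m v e n w f \<sigma>"
  have "real l * ?G \<le> real n * ?D \<pi> + real l * (real n - real m) * CY powr p"
    by (rule gospa2_cost_le_D_cost[OF p n1 pmX pmY])
      (use diamX diamY C2 ge gf pseudometric_powr_le_via[OF pmY ultra] in auto)
  then have "?G / n \<le> ?D \<pi> / l + CY powr p * (real (n - m) / n)"
    using n1 nl mn by (simp add: field_simps of_nat_diff)
  then have "(?G / n) powr (1 / p) \<le> (?D \<pi> / l + CY powr p * (real (n - m) / n)) powr (1 / p)"
    using gospa2_cost_nonneg[OF n1, of p C2 dX dY y0 m v e w f \<sigma>] p by (intro powr_mono2) auto
  with dGR2_le_cost[OF p n1 \<sigma>_permutes] show ?thesis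
    unfolding D_eq by (rule order_trans)
qed

end
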